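(* For $n\ge1$ let $M_n\in\mathbb R^{n\times n}$ be the matrix with entries $(M_n)_{ij}=(i-j)^2$. Then $\operatorname{st}_+(M_n)\le\lceil n/2\rceil+2$.
   Context: The SNT-rank $\operatorname{st}_+(A)$ of a symmetric entrywise nonnegative $n\times n$ matrix $A$ is the minimal $k$ such that $A=BCB^T$ with $B$ an entrywise nonnegative $n\times k$ matrix and $C$ a symmetric entrywise nonnegative $k\times k$ matrix. *)

theory Defs
  imports Complex_Main
begin

text \<open>An n x n real matrix is represented as a function nat => nat => real;
  only entries with indices < n are relevant. Indices are 0-based.\<close>

definition snt_factorization :: "nat \<Rightarrow> (nat \<Rightarrow> nat \<Rightarrow> real) \<Rightarrow> nat \<Rightarrow> bool" where
  "snt_factorization n A k \<longleftrightarrow>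
     (\<exists>B C :: nat \<Rightarrow> nat \<Rightarrow> real.
        (\<forall>i<n. \<forall>a<k. 0 \<le> B i a) \<and>
        (\<forall>a<k. \<forall>b<k. 0 \<le> C a b \<and> C a b = C b a) \<and>
        (\<forall>i<n. \<forall>j<n. A i j = (\<Sum>a<k. \<Sum>b<k. B i a * C a b * B j b)))"

definition snt_rank :: "nat \<Rightarrow> (nat \<Rightarrow> nat \<Rightarrow> real) \<Rightarrow> nat" where
  "snt_rank n A = (LEAST k. snt_factorization n A k)"

end

theory Submission
  imports Defs
begin

text \<open>Put \<open>c = (n - 1)/2\<close>. For \<open>x, y\<close> on the same side of \<open>c\<close> we have
  \<open>(x - y)\<^sup>2 = (\<bar>x - c\<bar> - \<bar>y - c\<bar>)\<^sup>2\<close>, and on opposite sides the extra term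
  \<open>4 \<bar>x - c\<bar> \<bar>y - c\<bar>\<close> appears. The first summand depends on \<open>i\<close> only through the folded
  index \<open>min i (n - 1 - i)\<close>, which takes \<open>\<lceil>n/2\<rceil>\<close> values, so it is the pullback of a
  \<open>\<lceil>n/2\<rceil> \<times> \<lceil>n/2\<rceil>\<close> nonnegative symmetric matrix and has SNT-rank at most \<open>\<lceil>n/2\<rceil>\<close>.
  The cross term is \<open>y z\<^sup>T + z y\<^sup>T\<close> for the nonnegative vectors \<open>y = 2 (c - i)\<^sub>+\<close> and
  \<open>z = 2 (i - c)\<^sub>+\<close>, of SNT-rank at most 2, and SNT-rank is subadditive.\<close>

lemma snt_rank_le: "snt_factorization n A k \<Longrightarrow> snt_rank n A \<le> k"
  unfolding snt_rank_def by (rule Least_le)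

lemma snt_factorization_cong:
  assumes "\<And>i j. i < n \<Longrightarrow> j < n \<Longrightarrow> A i j = A' i j"
  shows "snt_factorization n A k \<longleftrightarrow> snt_factorization n A' k"
  using assms unfolding snt_factorization_def by simp

lemma sum_lessThan_add_split:
  "(\<Sum>a<k + l. f a) = (\<Sum>a<k. f a) + (\<Sum>a<l. f (a + k))" for f :: "nat \<Rightarrow> 'a::comm_monoid_add"
  using sum.atLeastLessThan_concat[of 0 k "k + l" f] sum.shift_bounds_nat_ivl[of f 0 k l]
  by (simp add: atLeast0LessThan add.commute)

lemma sum_indicator_mult:
  "p < (k::nat) \<Longrightarrow> (\<Sum>a<k. (if a = p then 1 else 0) * f a) = (f p :: 'a::semiring_1)"
  by (simp add: if_distrib[where f="\<lambda>c. c * _"] cong: if_cong)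

lemma snt_factorization_add:
  assumes "snt_factorization n A k" and "snt_factorization n A' l"
  shows "snt_factorization n (\<lambda>i j. A i j + A' i j) (k + l)"
proof -
  obtain B C where B: "\<forall>i<n. \<forall>a<k. 0 \<le> B i a"
    and C: "\<forall>a<k. \<forall>b<k. 0 \<le> C a b \<and> C a b = C b a"
    and A: "\<forall>i<n. \<forall>j<n. A i j = (\<Sum>a<k. \<Sum>b<k. B i a * C a b * B j b)"
    using assms(1) unfolding snt_factorization_def by blast
  obtain B' C' where B': "\<forall>i<n. \<forall>a<l. 0 \<le> B' i a"
    and C': "\<forall>a<l. \<forall>b<l. 0 \<le> C' a b \<and> C' a b = C' b a"
    and A': "\<forall>i<n. \<forall>j<n. A' i j = (\<Sum>a<l. \<Sum>b<l. B' i a * C' a b * B' j b)"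
    using assms(2) unfolding snt_factorization_def by blast
  define B\<^sub>0 where "B\<^sub>0 i a = (if a < k then B i a else B' i (a - k))" for i a
  define C\<^sub>0 where "C\<^sub>0 a b = (if a < k \<and> b < k then C a b
      else if k \<le> a \<and> k \<le> b then C' (a - k) (b - k) else 0)" for a b
  have "(\<Sum>a<k + l. \<Sum>b<k + l. B\<^sub>0 i a * C\<^sub>0 a b * B\<^sub>0 j b)
      = (\<Sum>a<k. \<Sum>b<k. B i a * C a b * B j b) + (\<Sum>a<l. \<Sum>b<l. B' i a * C' a b * B' j b)"
    for i j
    by (simp add: sum_lessThan_add_split B\<^sub>0_def C\<^sub>0_def)
  then have "\<forall>i<n. \<forall>j<n. A i j + A' i j
      = (\<Sum>a<k + l. \<Sum>b<k + l. B\<^sub>0 i a * C\<^sub>0 a b * B\<^sub>0 j b)"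
    using A A' by simp
  moreover have "\<forall>i<n. \<forall>a<k + l. 0 \<le> B\<^sub>0 i a"
    using B B' by (simp add: B\<^sub>0_def)
  moreover have "\<forall>a<k + l. \<forall>b<k + l. 0 \<le> C\<^sub>0 a b \<and> C\<^sub>0 a b = C\<^sub>0 b a"
    using C C' by (auto simp: C\<^sub>0_def)
  ultimately show ?thesis
    unfolding snt_factorization_def by blast
qed

lemma snt_factorization_pullback:
  assumes p: "\<And>i. i < n \<Longrightarrow> p i < m"
    and D: "\<And>a b. a < m \<Longrightarrow> b < m \<Longrightarrow> 0 \<le> D a b \<and> D a b = D b a"
  shows "snt_factorization n (\<lambda>i j. D (p i) (p j)) m"
proof -
  define B where "B i a = (if a = p i then 1 else 0 :: real)" for i a
  have "(\<Sum>a<m. \<Sum>b<m. B i a * D a b * B j b) = D (p i) (p j)" if "i < n" "j < n" for i j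
    using p[OF that(1)] p[OF that(2)]
    by (simp add: B_def sum_indicator_mult mult.commute[of _ "if _ then _ else _"]
        flip: sum_distrib_left)
  then have "\<forall>i<n. \<forall>j<n. D (p i) (p j) = (\<Sum>a<m. \<Sum>b<m. B i a * D a b * B j b)"
    by simp
  moreover have "\<forall>i<n. \<forall>a<m. 0 \<le> B i a"
    by (simp add: B_def)
  moreover have "\<forall>a<m. \<forall>b<m. 0 \<le> D a b \<and> D a b = D b a"
    using D by blast
  ultimately show ?thesis
    unfolding snt_factorization_def by blast
qed

lemma snt_factorization_sym_outer_product:
  assumes "\<And>i. i < n \<Longrightarrow> 0 \<le> y i" and "\<And>i. i < n \<Longrightarrow> 0 \<le> z i"
  shows "snt_factorization n (\<lambda>i j. y i * z j + z i * y j) 2"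
proof -
  define B where "B i a = (if a = 0 then y i else z i)" for i a :: nat
  define C where "C a b = (if a = b then 0 else 1 :: real)" for a b :: nat
  have "\<forall>i<n. \<forall>j<n. y i * z j + z i * y j = (\<Sum>a<2. \<Sum>b<2. B i a * C a b * B j b)"
    by (simp add: numeral_2_eq_2 B_def C_def)
  moreover have "\<forall>i<n. \<forall>a<2. 0 \<le> B i a"
    using assms by (simp add: B_def)
  moreover have "\<forall>a<2. \<forall>b<2. 0 \<le> C a b \<and> C a b = C b a"
    by (simp add: C_def)
  ultimately show ?thesis
    unfolding snt_factorization_def by blast
qed

lemma square_diff_eq_fold_about:
  fixes x y c :: real
  shows "(x - y)\<^sup>2 = (\<bar>x - c\<bar> - \<bar>y - c\<bar>)\<^sup>2
    + (2 * max (c - x) 0) * (2 * max (y - c) 0) + (2 * max (x - c) 0) * (2 * max (c - y) 0)"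
  by (auto simp: abs_if max_def power2_eq_square algebra_simps)

lemma min_fold_less_ceiling_half:
  assumes "i < n"
  shows "min i (n - 1 - i) < nat \<lceil>real n / 2\<rceil>"
proof -
  have "2 * min i (n - 1 - i) < n"
    using assms by linarith
  then show ?thesis
    by linarith
qed

lemma abs_diff_centre_eq_fold:
  "i < n \<Longrightarrow> \<bar>real i - (real n - 1) / 2\<bar> = (real n - 1) / 2 - real (min i (n - 1 - i))"
  by (auto simp: min_def of_nat_diff field_simps)

theorem mainTheorem9:
  fixes n :: nat
  assumes "n \<ge> 1"
  shows "snt_rank n (\<lambda>i j. (real i - real j)^2) \<le> nat \<lceil>real n / 2\<rceil> + 2"
proof -
  define c where "c = (real n - 1) / 2"
  define folded where "folded i = min i (n - 1 - i)" for i
  define y where "y i = 2 * max (c - real i) 0" for i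
  define z where "z i = 2 * max (real i - c) 0" for i
  have decomposition: "(real i - real j)\<^sup>2
      = (real (folded i) - real (folded j))\<^sup>2 + (y i * z j + z i * y j)" if "i < n" "j < n" for i j
  proof -
    have "(real (folded i) - real (folded j))\<^sup>2 = (\<bar>real i - c\<bar> - \<bar>real j - c\<bar>)\<^sup>2"
      using that by (simp add: folded_def c_def abs_diff_centre_eq_fold power2_commute)
    then show ?thesis
      using square_diff_eq_fold_about[of "real i" "real j" c] by (simp add: y_def z_def)
  qed
  have "snt_factorization n (\<lambda>i j. (real (folded i) - real (folded j))\<^sup>2) (nat \<lceil>real n / 2\<rceil>)"
    using min_fold_less_ceiling_half unfolding folded_def
    by (intro snt_factorization_pullback) (simp_all add: power2_commute)
  moreover have "snt_factorization n (\<lambda>i j. y i * z j + z i * y j) 2"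
    by (rule snt_factorization_sym_outer_product) (simp_all add: y_def z_def)
  ultimately have "snt_factorization n
      (\<lambda>i j. (real (folded i) - real (folded j))\<^sup>2 + (y i * z j + z i * y j)) (nat \<lceil>real n / 2\<rceil> + 2)"
    by (rule snt_factorization_add)
  then have "snt_factorization n (\<lambda>i j. (real i - real j)\<^sup>2) (nat \<lceil>real n / 2\<rceil> + 2)"
    using snt_factorization_cong[of n "\<lambda>i j. (real i - real j)\<^sup>2"] decomposition by simp
  then show ?thesis
    by (rule snt_rank_le)
qed

end
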